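(* Let $\mathcal A\subset\mathbb R^n$ be compact with diameter $D_{\mathcal A}<\infty$ and symmetric ($\mathcal A=-\mathcal A$), let $\mathcal X=\mathrm{lin}(\mathcal A)$, let $f$ have $L$-Lipschitz gradient, and let $\eta>1$. Run the AC-FW algorithm with the Matching Pursuit subroutine and a damping sequence satisfying Condition (D), with $L_0>0$. Then the subroutine satisfies parts (i) and (ii) of Condition (S), and for every $t\ge0$, $$|\mathcal G\cap\mathcal I_\eta\cap[t]|\ge t+1-\left\lfloor\log_\eta\!\left(\frac{L}{rL_0}\right)\right\rfloor.$$ If additionally $f$ is convex and $R_{\mathcal A}<\infty$, then part (iii) of Condition (S) holds with $R=R_{\mathcal A}$.
   Context: $D_{\mathcal A}:=\sup_{x,y\in\mathcal A}\|x-y\|_2$; $f:\mathbb R^n\to\mathbb R$ is differentiable with $\|\nabla f(x)-\nabla f(y)\|_2\le L\|x-y\|_2$. $x^\star$ is an optimal solution of $\min_{x\in\mathcal X}f(x)$. Atomic norm: $\|x\|_{\mathcal A}:=\inf\{c>0:x\in c\cdot\mathrm{conv}(\mathcal A)\}$. $R_{\mathcal A}:=\max\{1,\sup\{\|x-x^\star\|_{\mathcal A}:x\in\mathrm{lin}(\mathcal A),\ f(x)\le f(x_0)\}\}$. For $x\ne y$, $\ell(x,y):=2|f(y)-f(x)-\nabla f(x)^\top(y-x)|/\|y-x\|_2^2$, $\ell(x,x):=0$. AC-FW algorithm: given $\{r_t\}_{t\ge0}$ and a subroutine, pick $x_{-1}\in\mathcal A$, $x_0\in\arg\min_{v\in\mathcal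 A}\nabla f(x_{-1})^\top v$, $L_0:=\ell(x_{-1},x_0)$. For $t=0,1,\dots$: $v_t\in\arg\min_{v\in\mathcal A}\nabla f(x_t)^\top v$; the subroutine returns $(d_t,\gamma_t^{\max})$; $\gamma_t:=\min\{\nabla f(x_t)^\top d_t/(L_t\|d_t\|_2^2),\gamma_t^{\max}\}$; $\bar x_{t+1}:=x_t-\gamma_td_t$; $L_{t+1}:=\max\{\ell(x_t,\bar x_{t+1}),r_tL_t\}$; $x_{t+1}:=\bar x_{t+1}$ if $f(\bar x_{t+1})<f(x_t)$, else $x_{t+1}:=x_t$. Matching Pursuit subroutine: $d_t:=-v_t$, $\gamma_t^{\max}:=\infty$. $[t]:=\{0,\dots,t\}$; $\mathcal I_\eta:=\{t\ge0:L_{t+1}\le\eta L_t\}$; $\mathcal G:=\{t\ge0:\gamma_t^{\max}\ge1\text{ or }\gamma_t<\gamma_t^{\max}\}$. Condition (D): $r_t\in(0,1]$ for all $t$ and $r:=\prod_{t\ge0}r_t\in(0,1]$. Condition (S): for all $t\ge0$: (i) $\|d_t\|_2\le D_{\mathcal A}$ and $x_t-\gamma d_t\in\mathcal X$ for all finite $\gamma\in[0,\gamma_t^{\max}]$; (ii) $\mathcal G$ is infinite; (iii) if $f$ is convex, there is $R\ge1$ independent of $t$ with $\nabla f(x_t)^\top d_t\ge(f(x_t)-f(x^\star))/R$. *)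

theory Defs
  imports "HOL-Analysis.Analysis"
begin

definition ell :: "('a::real_inner \<Rightarrow> real) \<Rightarrow> ('a \<Rightarrow> 'a) \<Rightarrow> 'a \<Rightarrow> 'a \<Rightarrow> real" where
  "ell f g x y = (if y = x then 0
     else 2 * \<bar>f y - f x - g x \<bullet> (y - x)\<bar> / (norm (y - x))\<^sup>2)"

definition atomic_norm :: "'a::real_vector set \<Rightarrow> 'a \<Rightarrow> ereal" where
  "atomic_norm A x = Inf {ereal c | c. c > 0 \<and> x \<in> (\<lambda>y. c *\<^sub>R y) ` (convex hull A)}"

definition R_atomic :: "'a::real_vector set \<Rightarrow> ('a \<Rightarrow> real) \<Rightarrow> 'a \<Rightarrow> 'a \<Rightarrow> ereal" where
  "R_atomic A f x0 xstar =
     max 1 (SUP x \<in> {x \<in> span A. f x \<le> f x0}. atomic_norm A (x - xstar))"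

text \<open>A run of the AC-FW algorithm with damping sequence r, started at xm1 (= x_{-1}).
  v t: linear minimization oracle output; (d t, gmax t): output of the subroutine;
  gam t: step size gamma_t; Lk t: L_t; x t: iterates.\<close>
definition acfw_run ::
  "'a::real_inner set \<Rightarrow> ('a \<Rightarrow> real) \<Rightarrow> ('a \<Rightarrow> 'a) \<Rightarrow> (nat \<Rightarrow> real) \<Rightarrow> 'a \<Rightarrow>
   (nat \<Rightarrow> 'a) \<Rightarrow> (nat \<Rightarrow> 'a) \<Rightarrow> (nat \<Rightarrow> 'a) \<Rightarrow> (nat \<Rightarrow> ereal) \<Rightarrow> (nat \<Rightarrow> real) \<Rightarrow>
   (nat \<Rightarrow> real) \<Rightarrow> bool" where
  "acfw_run A f g r xm1 x v d gmax gam Lk \<longleftrightarrow>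
     xm1 \<in> A \<and> x 0 \<in> A \<and> (\<forall>w\<in>A. g xm1 \<bullet> x 0 \<le> g xm1 \<bullet> w) \<and>
     Lk 0 = ell f g xm1 (x 0) \<and>
     (\<forall>t. v t \<in> A \<and> (\<forall>w\<in>A. g (x t) \<bullet> v t \<le> g (x t) \<bullet> w) \<and>
          ereal (gam t) = min (ereal (g (x t) \<bullet> d t / (Lk t * (norm (d t))\<^sup>2))) (gmax t) \<and>
          (let xb = x t - gam t *\<^sub>R d t in
             Lk (Suc t) = max (ell f g (x t) xb) (r t * Lk t) \<and>
             x (Suc t) = (if f xb < f (x t) then xb else x t)))"

definition mp_subroutine :: "(nat \<Rightarrow> 'a::real_vector) \<Rightarrow> (nat \<Rightarrow> 'a) \<Rightarrow> (nat \<Rightarrow> ereal) \<Rightarrow> bool" where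
  "mp_subroutine v d gmax \<longleftrightarrow> (\<forall>t. d t = - v t \<and> gmax t = \<infinity>)"

definition good_steps :: "(nat \<Rightarrow> ereal) \<Rightarrow> (nat \<Rightarrow> real) \<Rightarrow> nat set" where
  "good_steps gmax gam = {t. gmax t \<ge> 1 \<or> ereal (gam t) < gmax t}"

definition I_eta :: "real \<Rightarrow> (nat \<Rightarrow> real) \<Rightarrow> nat set" where
  "I_eta \<eta> Lk = {t. Lk (Suc t) \<le> \<eta> * Lk t}"

end

theory Submission
  imports Defs
begin

text \<open>Matching Pursuit steps along \<open>-v\<^sub>t\<close> with \<open>v\<^sub>t \<in> A\<close>, so the iterates stay in
  \<open>lin(A)\<close> and no step is ever clipped; by symmetry of \<open>A\<close>, \<open>-v\<^sub>t\<close> maximizes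
  \<open>\<nabla>f(x\<^sub>t)\<^sup>T w\<close> over \<open>A\<close>, hence over \<open>conv(A)\<close>, and convexity bounds the gap
  \<open>f(x\<^sub>t) - f(x\<^sup>\<star>) \<le> \<nabla>f(x\<^sub>t)\<^sup>T(x\<^sub>t - x\<^sup>\<star>)\<close> by \<open>\<parallel>x\<^sub>t - x\<^sup>\<star>\<parallel>\<^sub>A \<nabla>f(x\<^sub>t)\<^sup>T d\<^sub>t\<close>.
  For the count, the descent lemma keeps every \<open>L\<^sub>t\<close> below \<open>L\<close>, while a step outside
  \<open>I\<^sub>\<eta>\<close> multiplies \<open>L\<^sub>t\<close> by more than \<open>\<eta>\<close> and any step shrinks it by at most \<open>r\<^sub>t\<close>;
  so \<open>k\<close> steps outside \<open>I\<^sub>\<eta>\<close> force \<open>\<eta>\<^sup>k r L\<^sub>0 \<le> L\<close>.\<close>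

lemma has_real_derivative_along_line:
  fixes f :: "'a::real_inner \<Rightarrow> real"
  assumes grad: "\<And>y. GDERIV f y :> g y"
  shows "((\<lambda>s. f (x + s *\<^sub>R h)) has_real_derivative (g (x + s *\<^sub>R h) \<bullet> h)) (at s)"
proof -
  have line: "((\<lambda>s::real. x + s *\<^sub>R h) has_derivative (\<lambda>t. t *\<^sub>R h)) (at s)"
    by (auto intro!: derivative_eq_intros)
  have "((\<lambda>s. f (x + s *\<^sub>R h)) has_derivative (\<lambda>t. (t *\<^sub>R h) \<bullet> g (x + s *\<^sub>R h))) (at s)"
    using has_derivative_compose[OF line grad[unfolded gderiv_def]] by (simp add: o_def)
  moreover have "(\<lambda>t. (t *\<^sub>R h) \<bullet> g (x + s *\<^sub>R h)) = (*) (g (x + s *\<^sub>R h) \<bullet> h)"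
    by (auto simp: inner_commute)
  ultimately show ?thesis
    unfolding has_field_derivative_def by simp
qed

lemma lipschitz_gradient_taylor_bound:
  fixes f :: "'a::real_inner \<Rightarrow> real"
  assumes grad: "\<And>y. GDERIV f y :> g y"
    and lip: "\<And>y z. norm (g y - g z) \<le> L * norm (y - z)"
  shows "\<bar>f (x + h) - f x - g x \<bullet> h\<bar> \<le> L / 2 * (norm h)\<^sup>2"
proof -
  have slope: "\<bar>g (x + s *\<^sub>R h) \<bullet> h - g x \<bullet> h\<bar> \<le> L * s * (norm h)\<^sup>2" if "0 \<le> s" for s
  proof -
    have "\<bar>(g (x + s *\<^sub>R h) - g x) \<bullet> h\<bar> \<le> norm (g (x + s *\<^sub>R h) - g x) * norm h"
      by (rule Cauchy_Schwarz_ineq2)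
    also have "\<dots> \<le> L * norm (s *\<^sub>R h) * norm h"
      using lip[of "x + s *\<^sub>R h" x] by (intro mult_right_mono) auto
    also have "\<dots> = L * s * (norm h)\<^sup>2"
      using that by (simp add: power2_eq_square)
    finally show ?thesis
      by (simp add: inner_diff_left)
  qed
  define \<phi> where "\<phi> \<sigma> s = f (x + s *\<^sub>R h) - s * (g x \<bullet> h) + \<sigma> * (L / 2 * s\<^sup>2 * (norm h)\<^sup>2)"
    for \<sigma> s :: real
  have deriv_\<phi>: "(\<phi> \<sigma> has_real_derivative
      (g (x + s *\<^sub>R h) \<bullet> h - g x \<bullet> h + \<sigma> * (L * s * (norm h)\<^sup>2))) (at s)" for \<sigma> s
    unfolding \<phi>_def
    by (rule derivative_eq_intros has_real_derivative_along_line[OF grad] refl | simp)+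
  have "\<phi> (-1) 1 \<le> \<phi> (-1) 0"
  proof (rule DERIV_nonpos_imp_nonincreasing[of 0 1])
    fix s :: real
    assume "0 \<le> s" "s \<le> 1"
    then have "g (x + s *\<^sub>R h) \<bullet> h - g x \<bullet> h + (-1) * (L * s * (norm h)\<^sup>2) \<le> 0"
      using slope[of s] unfolding abs_le_iff by linarith
    then show "\<exists>y. (\<phi> (-1) has_real_derivative y) (at s) \<and> y \<le> 0"
      using deriv_\<phi>[of "-1" s] by blast
  qed simp
  moreover have "\<phi> 1 0 \<le> \<phi> 1 1"
  proof (rule DERIV_nonneg_imp_nondecreasing[of 0 1])
    fix s :: real
    assume "0 \<le> s" "s \<le> 1"
    then have "0 \<le> g (x + s *\<^sub>R h) \<bullet> h - g x \<bullet> h + 1 * (L * s * (norm h)\<^sup>2)"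
      using slope[of s] unfolding abs_le_iff by linarith
    then show "\<exists>y. (\<phi> 1 has_real_derivative y) (at s) \<and> y \<ge> 0"
      using deriv_\<phi>[of 1 s] by blast
  qed simp
  ultimately show ?thesis
    unfolding \<phi>_def abs_le_iff by simp
qed

lemma ell_le_lipschitz_constant:
  fixes f :: "'a::real_inner \<Rightarrow> real"
  assumes grad: "\<And>y. GDERIV f y :> g y"
    and lip: "\<And>y z. norm (g y - g z) \<le> L * norm (y - z)"
    and "y \<noteq> x"
  shows "ell f g x y \<le> L"
proof -
  have "\<bar>f (x + (y - x)) - f x - g x \<bullet> (y - x)\<bar> \<le> L / 2 * (norm (y - x))\<^sup>2"
    by (rule lipschitz_gradient_taylor_bound[OF grad lip])
  then show ?thesis
    using \<open>y \<noteq> x\<close> unfolding ell_def by (simp add: divide_le_eq)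
qed

lemma convex_on_gradient_inequality:
  fixes f :: "'a::real_inner \<Rightarrow> real"
  assumes grad: "\<And>y. GDERIV f y :> g y" and cvx: "convex_on UNIV f"
  shows "f x + g x \<bullet> (z - x) \<le> f z"
proof -
  define \<phi> where "\<phi> s = f (x + s *\<^sub>R (z - x))" for s :: real
  have "convex_on UNIV \<phi>"
    unfolding convex_on_def
  proof (intro conjI ballI allI impI convex_UNIV)
    fix a b u v :: real
    assume uv: "u \<ge> 0" "v \<ge> 0" "u + v = 1"
    have "x = u *\<^sub>R x + v *\<^sub>R x"
      using uv(3) by (metis scaleR_add_left scaleR_one)
    then have "x + (u *\<^sub>R a + v *\<^sub>R b) *\<^sub>R (z - x)
        = u *\<^sub>R (x + a *\<^sub>R (z - x)) + v *\<^sub>R (x + b *\<^sub>R (z - x))"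
      by (simp add: algebra_simps)
    then show "\<phi> (u *\<^sub>R a + v *\<^sub>R b) \<le> u * \<phi> a + v * \<phi> b"
      unfolding \<phi>_def using cvx uv unfolding convex_on_def by simp
  qed
  moreover have "(\<phi> has_real_derivative (g (x + 0 *\<^sub>R (z - x)) \<bullet> (z - x))) (at 0 within UNIV)"
    unfolding \<phi>_def by (rule has_real_derivative_along_line[OF grad])
  ultimately have "g x \<bullet> (z - x) * (1 - 0) \<le> \<phi> 1 - \<phi> 0"
    by (intro convex_on_imp_above_tangent) auto
  then show ?thesis
    unfolding \<phi>_def by simp
qed

lemma norm_le_half_diameter_symmetric:
  fixes A :: "'a::real_normed_vector set"
  assumes "bounded A" and "A = uminus ` A" and "v \<in> A"
  shows "2 * norm v \<le> diameter A"
proof -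
  have "- v \<in> A"
    using assms(2,3) by (metis image_eqI)
  then have "dist v (- v) \<le> diameter A"
    using diameter_bounded_bound[OF assms(1,3)] by blast
  then show ?thesis
    by (simp add: dist_norm scaleR_2[symmetric] del: scaleR_2)
qed

lemma symmetric_linear_minimizer_negation_maximizes:
  fixes A :: "'a::real_inner set"
  assumes "A = uminus ` A" and "\<And>w. w \<in> A \<Longrightarrow> a \<bullet> v \<le> a \<bullet> w" and "w \<in> A"
  shows "a \<bullet> w \<le> a \<bullet> (- v)"
proof -
  have "- w \<in> A"
    using assms(1,3) by (metis image_eqI)
  then show ?thesis
    using assms(2) by force
qed

lemma inner_le_atomic_norm_mult:
  fixes A :: "'a::real_inner set"
  assumes bound: "\<And>w. w \<in> A \<Longrightarrow> a \<bullet> w \<le> M" and "0 \<le> M"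
    and norm_z: "atomic_norm A z \<le> ereal R"
  shows "a \<bullet> z \<le> R * M"
proof (rule field_le_epsilon)
  fix e :: real
  assume "0 < e"
  define \<delta> where "\<delta> = e / (M + 1)"
  have "\<delta> > 0" and "\<delta> * M \<le> e"
    using \<open>0 < e\<close> \<open>0 \<le> M\<close> by (auto simp: \<delta>_def field_simps)
  have "atomic_norm A z < ereal (R + \<delta>)"
    using norm_z \<open>\<delta> > 0\<close> by (simp add: le_less_trans)
  then obtain c w where c: "0 < c" "c < R + \<delta>" and w: "w \<in> convex hull A" "z = c *\<^sub>R w"
    unfolding atomic_norm_def Inf_less_iff by auto
  have "convex hull A \<subseteq> {w. a \<bullet> w \<le> M}"
    by (rule hull_minimal) (use bound convex_halfspace_le in auto)
  then have "a \<bullet> z \<le> c * M"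
    using w c(1) by (auto intro: mult_left_mono)
  also have "\<dots> \<le> (R + \<delta>) * M"
    using c(2) \<open>0 \<le> M\<close> by (simp add: mult_right_mono)
  finally show "a \<bullet> z \<le> R * M + e"
    using \<open>\<delta> * M \<le> e\<close> by (simp add: algebra_simps)
qed

lemma damped_sequence_growth:
  fixes \<eta> :: real and r Lk :: "nat \<Rightarrow> real"
  assumes "0 \<le> \<eta>" and r: "\<And>t. 0 \<le> r t \<and> r t \<le> 1" and "0 \<le> Lk 0"
    and damped: "\<And>t. r t * Lk t \<le> Lk (Suc t)"
  shows "\<eta> ^ card ({..<n} - I_eta \<eta> Lk) * (\<Prod>t<n. r t) * Lk 0 \<le> Lk n"
proof (induction n)
  case 0
  then show ?case by simp
next
  case (Suc n)
  define B where "B = \<eta> ^ card ({..<n} - I_eta \<eta> Lk) * (\<Prod>t<n. r t) * Lk 0"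
  have "0 \<le> B"
    using assms(1,3) r unfolding B_def by (simp add: prod_nonneg)
  show ?case
  proof (cases "n \<in> I_eta \<eta> Lk")
    case True
    then have "{..<Suc n} - I_eta \<eta> Lk = {..<n} - I_eta \<eta> Lk"
      using less_Suc_eq by auto
    then have "\<eta> ^ card ({..<Suc n} - I_eta \<eta> Lk) * (\<Prod>t<Suc n. r t) * Lk 0 = r n * B"
      unfolding B_def by simp
    also have "\<dots> \<le> r n * Lk n"
      using Suc r[of n] unfolding B_def by (simp add: mult_left_mono)
    finally show ?thesis
      using damped[of n] by linarith
  next
    case False
    then have "{..<Suc n} - I_eta \<eta> Lk = insert n ({..<n} - I_eta \<eta> Lk)"
      using less_Suc_eq by auto
    then have "\<eta> ^ card ({..<Suc n} - I_eta \<eta> Lk) * (\<Prod>t<Suc n. r t) * Lk 0 = r n * (\<eta> * B)"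
      unfolding B_def by simp
    also have "\<dots> \<le> \<eta> * B"
      using r[of n] \<open>0 \<le> B\<close> \<open>0 \<le> \<eta>\<close> by (intro mult_left_le_one_le) auto
    also have "\<dots> \<le> \<eta> * Lk n"
      using Suc \<open>0 \<le> \<eta>\<close> unfolding B_def by (simp add: mult_left_mono)
    also have "\<dots> < Lk (Suc n)"
      using False unfolding I_eta_def by simp
    finally show ?thesis by simp
  qed
qed

lemma card_not_I_eta_le_floor_log:
  fixes \<eta> L rr :: real and r Lk :: "nat \<Rightarrow> real"
  assumes "1 < \<eta>" and r: "\<And>t. 0 < r t \<and> r t \<le> 1"
    and prod: "(\<lambda>n. \<Prod>t<n. r t) \<longlonglongrightarrow> rr" and "0 < rr"
    and "0 < Lk 0" and damped: "\<And>t. r t * Lk t \<le> Lk (Suc t)" and bounded: "\<And>t. Lk t \<le> L"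
  shows "int (card ({..<n} - I_eta \<eta> Lk)) \<le> \<lfloor>log \<eta> (L / (rr * Lk 0))\<rfloor>"
proof -
  define K where "K = card ({..<n} - I_eta \<eta> Lk)"
  have r_nonneg: "0 \<le> r t" for t
    using r less_imp_le by blast
  then have "decseq (\<lambda>n. \<Prod>t<n. r t)"
    by (intro decseq_SucI) (simp add: mult_left_le prod_nonneg r)
  then have "rr \<le> (\<Prod>t<n. r t)"
    using decseq_ge prod by blast
  then have "\<eta> ^ K * rr * Lk 0 \<le> \<eta> ^ K * (\<Prod>t<n. r t) * Lk 0"
    using assms(1,5) by (simp add: mult_right_mono)
  also have "\<dots> \<le> Lk n"
    unfolding K_def
    by (rule damped_sequence_growth) (use assms(1,5) r r_nonneg damped in auto)
  also have "\<dots> \<le> L"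
    by (rule bounded)
  finally have "\<eta> ^ K \<le> L / (rr * Lk 0)"
    using \<open>0 < rr\<close> \<open>0 < Lk 0\<close> by (simp add: pos_le_divide_eq mult.assoc)
  moreover have "0 < L / (rr * Lk 0)"
    using \<open>0 < rr\<close> \<open>0 < Lk 0\<close> bounded[of 0] by simp
  ultimately have "real K \<le> log \<eta> (L / (rr * Lk 0))"
    using \<open>1 < \<eta>\<close> by (simp add: le_log_iff powr_realpow)
  then show ?thesis
    unfolding K_def by (simp add: le_floor_iff)
qed

lemma card_I_eta_atLeastAtMost_ge:
  fixes \<eta> L rr :: real and r Lk :: "nat \<Rightarrow> real"
  assumes "1 < \<eta>" and "\<And>t. 0 < r t \<and> r t \<le> 1"
    and "(\<lambda>n. \<Prod>t<n. r t) \<longlonglongrightarrow> rr" and "0 < rr"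
    and "0 < Lk 0" and "\<And>t. r t * Lk t \<le> Lk (Suc t)" and "\<And>t. Lk t \<le> L"
  shows "real t + 1 - real_of_int \<lfloor>log \<eta> (L / (rr * Lk 0))\<rfloor> \<le> real (card (I_eta \<eta> Lk \<inter> {0..t}))"
proof -
  have "{0..t} = {..<Suc t}" by auto
  then have "card (I_eta \<eta> Lk \<inter> {0..t}) + card ({..<Suc t} - I_eta \<eta> Lk) = Suc t"
    using card_Int_Diff[of "{..<Suc t}" "I_eta \<eta> Lk"] by (simp add: Int_commute)
  then show ?thesis
    using card_not_I_eta_le_floor_log[OF assms, of "Suc t"] by linarith
qed

lemma acfw_run_init:
  assumes "acfw_run A f g r xm1 x v d gmax gam Lk"
  shows "x 0 \<in> A" and "Lk 0 = ell f g xm1 (x 0)"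
  using assms unfolding acfw_run_def by auto

lemma acfw_run_linear_minimizer:
  assumes "acfw_run A f g r xm1 x v d gmax gam Lk"
  shows "v t \<in> A" and "\<And>w. w \<in> A \<Longrightarrow> g (x t) \<bullet> v t \<le> g (x t) \<bullet> w"
  using assms unfolding acfw_run_def by auto

lemma acfw_run_step:
  assumes "acfw_run A f g r xm1 x v d gmax gam Lk"
  shows "Lk (Suc t) = max (ell f g (x t) (x t - gam t *\<^sub>R d t)) (r t * Lk t)"
    and "x (Suc t) = (if f (x t - gam t *\<^sub>R d t) < f (x t) then x t - gam t *\<^sub>R d t else x t)"
  using assms unfolding acfw_run_def Let_def by auto

lemma acfw_run_Lk_ge_damped:
  assumes "acfw_run A f g r xm1 x v d gmax gam Lk"
  shows "r t * Lk t \<le> Lk (Suc t)"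
  using acfw_run_step(1)[OF assms] by simp

lemma acfw_run_in_span:
  assumes run: "acfw_run A f g r xm1 x v d gmax gam Lk" and d: "\<And>t. d t \<in> span A"
  shows "x t \<in> span A"
proof (induction t)
  case 0
  then show ?case
    using acfw_run_init(1)[OF run] span_base by blast
next
  case (Suc t)
  then show ?case
    using acfw_run_step(2)[OF run, of t] d[of t] by (simp add: span_diff span_scale)
qed

lemma acfw_run_objective_le_initial:
  assumes "acfw_run A f g r xm1 x v d gmax gam Lk"
  shows "f (x t) \<le> f (x 0)"
proof (induction t)
  case (Suc t)
  then show ?case
    using acfw_run_step(2)[OF assms, of t] by auto
qed simp

lemma acfw_run_Lk_bounds:
  assumes run: "acfw_run A f g r xm1 x v d gmax gam Lk"
    and r: "\<And>t. 0 < r t \<and> r t \<le> 1" and "0 < Lk 0"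
    and ell_le: "\<And>y z. z \<noteq> y \<Longrightarrow> ell f g y z \<le> L"
  shows "0 < Lk t \<and> Lk t \<le> L"
proof -
  have "x 0 \<noteq> xm1"
    using \<open>0 < Lk 0\<close> acfw_run_init(2)[OF run] unfolding ell_def by auto
  then have "Lk 0 \<le> L"
    using ell_le acfw_run_init(2)[OF run] by simp
  then have ell_le_L: "ell f g y z \<le> L" for y z
    using ell_le[of z y] \<open>0 < Lk 0\<close> unfolding ell_def by (cases "z = y") auto
  show ?thesis
  proof (induction t)
    case 0
    then show ?case
      using \<open>0 < Lk 0\<close> \<open>Lk 0 \<le> L\<close> by simp
  next
    case (Suc t)
    have "0 < r t * Lk t"
      using r[of t] Suc by simp
    moreover have "r t * Lk t \<le> Lk t"
      using r[of t] Suc by (intro mult_left_le_one_le) auto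
    ultimately have "0 < r t * Lk t" and "r t * Lk t \<le> L"
      using Suc by linarith+
    then show ?case
      using acfw_run_step(1)[OF run, of t] ell_le_L by (simp add: le_max_iff_disj)
  qed
qed

theorem lemma6:
  fixes A :: "'a::euclidean_space set" and f :: "'a \<Rightarrow> real" and g :: "'a \<Rightarrow> 'a"
    and L \<eta> rr :: real and r :: "nat \<Rightarrow> real" and xm1 :: 'a
    and x v d :: "nat \<Rightarrow> 'a" and gmax :: "nat \<Rightarrow> ereal" and gam Lk :: "nat \<Rightarrow> real"
  assumes cpt: "compact A"
    and sym: "A = uminus ` A"
    and grad: "\<And>y. GDERIV f y :> g y"
    and lip: "\<And>y z. norm (g y - g z) \<le> L * norm (y - z)"
    and eta: "\<eta> > 1"
    and damp: "\<And>t. 0 < r t \<and> r t \<le> 1"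
    and prod: "(\<lambda>n. \<Prod>t<n. r t) \<longlonglongrightarrow> rr" and rr_pos: "0 < rr" and rr_le: "rr \<le> 1"
    and run: "acfw_run A f g r xm1 x v d gmax gam Lk"
    and mp: "mp_subroutine v d gmax"
    and L0: "Lk 0 > 0"
  shows "(\<forall>t. norm (d t) \<le> diameter A \<and>
              (\<forall>\<gamma>::real. 0 \<le> \<gamma> \<and> ereal \<gamma> \<le> gmax t \<longrightarrow> x t - \<gamma> *\<^sub>R d t \<in> span A))
       \<and> infinite (good_steps gmax gam)
       \<and> (\<forall>t. real (card (good_steps gmax gam \<inter> I_eta \<eta> Lk \<inter> {0..t}))
               \<ge> real t + 1 - real_of_int \<lfloor>log \<eta> (L / (rr * Lk 0))\<rfloor>)
       \<and> (\<forall>xstar. xstar \<in> span A \<and> (\<forall>y\<in>span A. f xstar \<le> f y) \<longrightarrow>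
            convex_on UNIV f \<longrightarrow> R_atomic A f (x 0) xstar \<noteq> \<infinity> \<longrightarrow>
            (\<forall>t. g (x t) \<bullet> d t \<ge> (f (x t) - f xstar) / real_of_ereal (R_atomic A f (x 0) xstar)))"
proof -
  have d: "d t = - v t" and "gmax t = \<infinity>" for t
    using mp unfolding mp_subroutine_def by auto
  then have all_good: "good_steps gmax gam = UNIV"
    unfolding good_steps_def by simp
  have d_span: "d t \<in> span A" for t
    using acfw_run_linear_minimizer(1)[OF run] by (simp add: d span_base span_neg)
  have "norm (d t) \<le> diameter A" for t
    using norm_le_half_diameter_symmetric[OF compact_imp_bounded[OF cpt] sym
        acfw_run_linear_minimizer(1)[OF run, of t]] norm_ge_zero[of "v t"]
    unfolding d norm_minus_cancel by linarith
  moreover have "x t - \<gamma> *\<^sub>R d t \<in> span A" for t \<gamma>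
    using acfw_run_in_span[OF run d_span] d_span by (simp add: span_diff span_scale)
  moreover have "real t + 1 - real_of_int \<lfloor>log \<eta> (L / (rr * Lk 0))\<rfloor> \<le> card (I_eta \<eta> Lk \<inter> {0..t})"
    for t
  proof -
    have "Lk t \<le> L" for t
      using acfw_run_Lk_bounds[OF run damp L0 ell_le_lipschitz_constant[OF grad lip]] by blast
    then show ?thesis
      using card_I_eta_atLeastAtMost_ge[OF eta damp prod rr_pos L0 acfw_run_Lk_ge_damped[OF run]]
      by blast
  qed
  moreover have "(f (x t) - f xstar) / real_of_ereal (R_atomic A f (x 0) xstar) \<le> g (x t) \<bullet> d t"
    if cvx: "convex_on UNIV f" and R_finite: "R_atomic A f (x 0) xstar \<noteq> \<infinity>" for xstar t
  proof -
    define R where "R = real_of_ereal (R_atomic A f (x 0) xstar)"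
    have "1 \<le> R_atomic A f (x 0) xstar"
      unfolding R_atomic_def by simp
    then have R_eq: "R_atomic A f (x 0) xstar = ereal R" and "1 \<le> R"
      using R_finite unfolding R_def by (cases "R_atomic A f (x 0) xstar"; simp)+
    have max_d: "g (x t) \<bullet> w \<le> g (x t) \<bullet> d t" if "w \<in> A" for w
      using symmetric_linear_minimizer_negation_maximizes[OF sym
          acfw_run_linear_minimizer(2)[OF run] that] by (simp add: d)
    then have "0 \<le> g (x t) \<bullet> d t"
      using acfw_run_linear_minimizer(1)[OF run, of t] by (fastforce simp: d)
    have "atomic_norm A (x t - xstar)
        \<le> (SUP y \<in> {y \<in> span A. f y \<le> f (x 0)}. atomic_norm A (y - xstar))"
      using acfw_run_in_span[OF run d_span] acfw_run_objective_le_initial[OF run]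
      by (intro SUP_upper) auto
    also have "\<dots> \<le> ereal R"
      unfolding R_eq[symmetric] R_atomic_def by simp
    finally have "atomic_norm A (x t - xstar) \<le> ereal R" .
    from inner_le_atomic_norm_mult[OF max_d \<open>0 \<le> g (x t) \<bullet> d t\<close> this]
    have "g (x t) \<bullet> (x t - xstar) \<le> R * (g (x t) \<bullet> d t)" .
    then have "f (x t) - f xstar \<le> R * (g (x t) \<bullet> d t)"
      using convex_on_gradient_inequality[OF grad cvx, of "x t" xstar]
      by (simp add: inner_diff_right)
    then show ?thesis
      using \<open>1 \<le> R\<close> unfolding R_def by (simp add: divide_le_eq mult.commute)
  qed
  ultimately show ?thesis
    by (simp add: all_good)
qed

end
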